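(* Let $\mathbb H$ be the real quaternion algebra. Let $a,d\in\mathbb H$ be nonzero with $\Re(a)=0$ and $ad=-da$, let $m,n\in\mathbb R$, and let $f(z)=z^2+az+m+na+d$. Let $z_0$ be a root of $f$ (i.e. $z_0^2+az_0+m+na+d=0$), and let $r_0=\Re(z_0)$, $N_0=-\Im(z_0)^2$. If $n\neq0$, then $r_0$ is a root of $16r^6+(-8a^2+16m)r^4+(-a^2(4m-a^2)+4a^2n^2+4d^2)r^2-a^4n^2=0$ and $\Im(z_0)=-(2r_0+a)^{-1}\left(\frac{1}{2r_0}a(r_0+n)(2r_0+a)+d\right)$. If $n=0$, then either $r_0=0$, $N_0$ is a root of $N^2+(a^2-2m)N+m^2-d^2=0$ and $\Im(z_0)=-a^{-1}(m+d-N_0)$; or $r_0$ is a root of $16r^4+(-8a^2+16m)r^2-a^2(4m-a^2)+4d^2=0$ and $\Im(z_0)=-(2r_0+a)^{-1}\left(\frac12a(2r_0+a)+d\right)$.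
   Context: For $q=c_1+c_2i+c_3j+c_4k\in\mathbb H$, $\Re(q)=c_1$ and $\Im(q)=q-\Re(q)$. Under the hypotheses $a$ and $d$ are pure imaginary, so $a^2,d^2\in\mathbb R$. *)

theory Defs
  imports Complex_Main
begin

datatype quat = Quat (Re: real) (Im1: real) (Im2: real) (Im3: real)

lemma quat_eqI [intro?]:
  "Re x = Re y \<Longrightarrow> Im1 x = Im1 y \<Longrightarrow> Im2 x = Im2 y \<Longrightarrow> Im3 x = Im3 y \<Longrightarrow> x = y"
  by (cases x; cases y) simp

lemma quat_eq_iff: "x = y \<longleftrightarrow> Re x = Re y \<and> Im1 x = Im1 y \<and> Im2 x = Im2 y \<and> Im3 x = Im3 y"
  by (auto intro: quat_eqI)

instantiation quat :: real_vector
begin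
definition "0 = Quat 0 0 0 0"
definition "x + y = Quat (Re x + Re y) (Im1 x + Im1 y) (Im2 x + Im2 y) (Im3 x + Im3 y)"
definition "- x = Quat (- Re x) (- Im1 x) (- Im2 x) (- Im3 x)"
definition "x - y = Quat (Re x - Re y) (Im1 x - Im1 y) (Im2 x - Im2 y) (Im3 x - Im3 y)"
definition "scaleR r x = Quat (r * Re x) (r * Im1 x) (r * Im2 x) (r * Im3 x)"
instance
  by standard (auto simp: quat_eq_iff zero_quat_def plus_quat_def uminus_quat_def
      minus_quat_def scaleR_quat_def algebra_simps)
end

instantiation quat :: real_algebra_1
begin
definition "1 = Quat 1 0 0 0"
definition "x * y = Quat
  (Re x * Re y - Im1 x * Im1 y - Im2 x * Im2 y - Im3 x * Im3 y)
  (Re x * Im1 y + Im1 x * Re y + Im2 x * Im3 y - Im3 x * Im2 y)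
  (Re x * Im2 y - Im1 x * Im3 y + Im2 x * Re y + Im3 x * Im1 y)
  (Re x * Im3 y + Im1 x * Im2 y - Im2 x * Im1 y + Im3 x * Re y)"
instance
  by standard (auto simp: quat_eq_iff zero_quat_def plus_quat_def one_quat_def
      times_quat_def scaleR_quat_def algebra_simps)
end

definition qnorm2 :: "quat \<Rightarrow> real" where
  "qnorm2 x = (Re x)^2 + (Im1 x)^2 + (Im2 x)^2 + (Im3 x)^2"

definition qcnj :: "quat \<Rightarrow> quat" where
  "qcnj x = Quat (Re x) (- Im1 x) (- Im2 x) (- Im3 x)"

lemma quat_sq_pos: "x \<noteq> 0 \<Longrightarrow> qnorm2 x > 0"
proof -
  assume "x \<noteq> 0"
  then have "Re x \<noteq> 0 \<or> Im1 x \<noteq> 0 \<or> Im2 x \<noteq> 0 \<or> Im3 x \<noteq> 0"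
    by (auto simp: quat_eq_iff zero_quat_def)
  then show ?thesis unfolding qnorm2_def
    by (smt (verit) zero_less_power2 zero_le_power2)
qed

lemma qcnj_mult1: "qcnj x * x = Quat (qnorm2 x) 0 0 0"
  by (simp add: quat_eq_iff qcnj_def times_quat_def qnorm2_def power2_eq_square algebra_simps)

lemma qcnj_mult2: "x * qcnj x = Quat (qnorm2 x) 0 0 0"
  by (simp add: quat_eq_iff qcnj_def times_quat_def qnorm2_def power2_eq_square algebra_simps)

instantiation quat :: division_ring
begin
definition "inverse x = scaleR (1 / qnorm2 x) (qcnj x)"
definition divide_quat_def: "divide x (y :: quat) = x * inverse y"
lemma quat_inverse_left: "(a::quat) \<noteq> 0 \<Longrightarrow> inverse a * a = 1"
proof -
  assume "a \<noteq> 0"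
  then have s: "qnorm2 a \<noteq> 0"
    using quat_sq_pos by force
  show ?thesis
    using s unfolding inverse_quat_def mult_scaleR_left qcnj_mult1 by (simp add: scaleR_quat_def one_quat_def)
qed
lemma quat_inverse_right: "(a::quat) \<noteq> 0 \<Longrightarrow> a * inverse a = 1"
proof -
  assume "a \<noteq> 0"
  then have s: "qnorm2 a \<noteq> 0"
    using quat_sq_pos by force
  show ?thesis
    using s unfolding inverse_quat_def mult_scaleR_right qcnj_mult2 by (simp add: scaleR_quat_def one_quat_def)
qed
instance
  by standard (simp_all add: quat_inverse_left quat_inverse_right divide_quat_def,
     simp add: inverse_quat_def zero_quat_def scaleR_quat_def qcnj_def)
end

definition Imq :: "quat \<Rightarrow> quat" where
  "Imq q = q - of_real (Re q)"

end

theory Submission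
  imports Defs
begin

text \<open>Write \<open>z = r + v\<close> with \<open>v\<close> pure. The hypotheses force \<open>d\<close> to be pure and orthogonal
  to \<open>a\<close>, so \<open>f(z) = 0\<close> splits into the real equation \<open>r\<^sup>2 - |v|\<^sup>2 - \<langle>a,v\<rangle> + m = 0\<close> and
  the vector equation \<open>2rv + (r+n)a + a \<times> v + d = 0\<close>. Taking inner products of the vector
  equation with \<open>a\<close>, \<open>v\<close>, \<open>d\<close> and \<open>a \<times> v\<close> gives scalar relations from which
  \<open>\<langle>a,v\<rangle>\<close> and \<open>|v|\<^sup>2\<close> can be eliminated, leaving a polynomial equation in \<open>r\<close> alone;
  when \<open>n = r = 0\<close> it degenerates and one uses a quadratic equation in \<open>|v|\<^sup>2\<close> instead. Once \<open>r\<close> is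
  known, the vector equation is linear in \<open>v\<close> with coefficient \<open>2r + a \<noteq> 0\<close>, which gives
  the formulas for \<open>Im z\<close>. Since \<open>a\<^sup>2 = -|a|\<^sup>2\<close> and \<open>d\<^sup>2 = -|d|\<^sup>2\<close> are real, the
  quaternion-valued polynomial identities reduce to real ones.\<close>

lemma quat_zero_sel [simp]: "Re (0::quat) = 0" "Im1 (0::quat) = 0" "Im2 (0::quat) = 0" "Im3 (0::quat) = 0"
  by (simp_all add: zero_quat_def)

lemma quat_one_sel [simp]: "Re (1::quat) = 1" "Im1 (1::quat) = 0" "Im2 (1::quat) = 0" "Im3 (1::quat) = 0"
  by (simp_all add: one_quat_def)

lemma quat_plus_sel [simp]:
  "Re (x + y) = Re x + Re y" "Im1 (x + y) = Im1 x + Im1 y"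
  "Im2 (x + y) = Im2 x + Im2 y" "Im3 (x + y) = Im3 x + Im3 y"
  by (simp_all add: plus_quat_def)

lemma quat_minus_sel [simp]:
  "Re (x - y) = Re x - Re y" "Im1 (x - y) = Im1 x - Im1 y"
  "Im2 (x - y) = Im2 x - Im2 y" "Im3 (x - y) = Im3 x - Im3 y"
  by (simp_all add: minus_quat_def)

lemma quat_uminus_sel [simp]:
  "Re (- x) = - Re x" "Im1 (- x) = - Im1 x" "Im2 (- x) = - Im2 x" "Im3 (- x) = - Im3 x"
  by (simp_all add: uminus_quat_def)

lemma quat_mult_sel [simp]:
  "Re (x * y) = Re x * Re y - Im1 x * Im1 y - Im2 x * Im2 y - Im3 x * Im3 y"
  "Im1 (x * y) = Re x * Im1 y + Im1 x * Re y + Im2 x * Im3 y - Im3 x * Im2 y"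
  "Im2 (x * y) = Re x * Im2 y - Im1 x * Im3 y + Im2 x * Re y + Im3 x * Im1 y"
  "Im3 (x * y) = Re x * Im3 y + Im1 x * Im2 y - Im2 x * Im1 y + Im3 x * Re y"
  by (simp_all add: times_quat_def)

lemma quat_of_real_sel [simp]:
  "Re (of_real c :: quat) = c" "Im1 (of_real c :: quat) = 0"
  "Im2 (of_real c :: quat) = 0" "Im3 (of_real c :: quat) = 0"
  by (simp_all add: of_real_def scaleR_quat_def)

lemma quat_of_real_power_sel [simp]:
  "Re ((of_real c :: quat)^k) = c^k" "Im1 ((of_real c :: quat)^k) = 0"
  "Im2 ((of_real c :: quat)^k) = 0" "Im3 ((of_real c :: quat)^k) = 0"
  using quat_of_real_sel[of "c^k"] by (simp_all only: of_real_power)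

lemma quat_numeral_sel [simp]:
  "Re (numeral k :: quat) = numeral k" "Im1 (numeral k :: quat) = 0"
  "Im2 (numeral k :: quat) = 0" "Im3 (numeral k :: quat) = 0"
  using quat_of_real_sel[of "numeral k"] by simp_all

lemma quat_half_sel [simp]:
  "Re (1/2 :: quat) = 1/2" "Im1 (1/2 :: quat) = 0" "Im2 (1/2 :: quat) = 0" "Im3 (1/2 :: quat) = 0"
  by (simp_all add: divide_quat_def inverse_quat_def qcnj_def qnorm2_def scaleR_quat_def)

lemma Imq_sel [simp]: "Re (Imq q) = 0" "Im1 (Imq q) = Im1 q" "Im2 (Imq q) = Im2 q" "Im3 (Imq q) = Im3 q"
  by (simp_all add: Imq_def)

definition qdot :: "quat \<Rightarrow> quat \<Rightarrow> real" where
  "qdot x y = Im1 x * Im1 y + Im2 x * Im2 y + Im3 x * Im3 y"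

lemma pure_quat_square: "Re x = 0 \<Longrightarrow> x^2 = - of_real (qnorm2 x)"
  by (simp add: quat_eq_iff power2_eq_square qnorm2_def)

lemma anticommuting_pure_quat:
  assumes "a \<noteq> 0" "Re a = 0" "a * d = - (d * a)"
  shows "Re d = 0" "qdot a d = 0"
proof -
  have "Re d * Im1 a = 0" "Re d * Im2 a = 0" "Re d * Im3 a = 0" "qdot a d = 0"
    using assms(2,3) by (simp_all add: quat_eq_iff qdot_def algebra_simps)
  moreover have "Im1 a \<noteq> 0 \<or> Im2 a \<noteq> 0 \<or> Im3 a \<noteq> 0"
    using assms(1,2) by (auto simp: quat_eq_iff)
  ultimately show "Re d = 0" "qdot a d = 0" by auto
qed

lemma eq_neg_inverse_mult_if:
  fixes X :: "'a::division_ring"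
  assumes "X \<noteq> 0" "X * v = - Y"
  shows "v = - inverse X * Y"
proof -
  have "v = inverse X * (X * v)" using assms(1) by (simp add: mult.assoc[symmetric])
  then show ?thesis using assms(2) by simp
qed

locale quat_quadratic_root =
  fixes a d z :: quat and m n :: real
  assumes a_nz: "a \<noteq> 0" and a_pure: "Re a = 0" and anticommute: "a * d = - (d * a)"
    and root: "z^2 + a * z + of_real m + of_real n * a + d = 0"
begin

abbreviation r :: real where "r \<equiv> Re z"

lemma d_pure: "Re d = 0" and a_perp_d: "qdot a d = 0"
  using anticommuting_pure_quat[OF a_nz a_pure anticommute] by simp_all

lemma root_components:
  "r^2 - qnorm2 (Imq z) - qdot a z + m = 0"
  "2 * r * Im1 z + Im1 a * r + Im2 a * Im3 z - Im3 a * Im2 z + n * Im1 a + Im1 d = 0"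
  "2 * r * Im2 z + Im2 a * r - Im1 a * Im3 z + Im3 a * Im1 z + n * Im2 a + Im2 d = 0"
  "2 * r * Im3 z + Im3 a * r + Im1 a * Im2 z - Im2 a * Im1 z + n * Im3 a + Im3 d = 0"
  using arg_cong[OF root, of Re] arg_cong[OF root, of Im1] arg_cong[OF root, of Im2]
    arg_cong[OF root, of Im3]
  by (simp_all add: power2_eq_square a_pure d_pure qdot_def qnorm2_def algebra_simps)

lemma root_dot_relation: "2 * r * qdot a z + (r + n) * qnorm2 a = 0"
  using root_components a_pure a_perp_d unfolding qdot_def qnorm2_def by algebra

text \<open>Inner products of the vector equation with \<open>v\<close>, \<open>d\<close> and \<open>a \<times> v\<close>; note that
  \<open>qdot (a * z) d = \<langle>a \<times> v, d\<rangle>\<close> because \<open>a \<bottom> d\<close>, and \<open>|a \<times> v|\<^sup>2 = |a|\<^sup>2|v|\<^sup>2 - \<langle>a,v\<rangle>\<^sup>2\<close>.\<close>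
lemma root_norm_relation:
  "(4 * r^2 + qnorm2 a) * (r^2 + m - qdot a z) + 2 * r * (r + n) * qdot a z
     - (qdot a z)^2 - qnorm2 d = 0"
proof -
  have dot_v: "2 * r * qnorm2 (Imq z) + (r + n) * qdot a z + qdot z d = 0"
    using root_components a_perp_d unfolding qdot_def qnorm2_def by (simp add: a_pure) algebra
  have dot_d: "2 * r * qdot z d + qdot (a * z) d + qnorm2 d = 0"
    using root_components a_perp_d unfolding qdot_def qnorm2_def by (simp add: a_pure d_pure) algebra
  have dot_axv: "qnorm2 a * qnorm2 (Imq z) - (qdot a z)^2 + qdot (a * z) d = 0"
    using root_components a_perp_d unfolding qdot_def qnorm2_def by (simp add: a_pure) algebra
  have "qnorm2 (Imq z) = r^2 + m - qdot a z"
    using root_components(1) by simp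
  with dot_v dot_d dot_axv show ?thesis by algebra
qed

lemma Re_root_sextic_real:
  "16 * r^6 + (8 * qnorm2 a + 16 * m) * r^4
     + (4 * m * qnorm2 a + (qnorm2 a)^2 - 4 * qnorm2 a * n^2 - 4 * qnorm2 d) * r^2
     - (qnorm2 a)^2 * n^2 = 0"
  using root_dot_relation root_norm_relation by algebra

lemma a_square: "a^2 = - of_real (qnorm2 a)"
  using pure_quat_square a_pure .

lemma d_square: "d^2 = - of_real (qnorm2 d)"
  using pure_quat_square d_pure .

lemma Imq_square: "(Imq z)^2 = - of_real (qnorm2 (Imq z))"
  by (simp add: pure_quat_square)

lemma real_plus_a_nz: "of_real c + a \<noteq> 0"
  using a_nz a_pure by (auto simp: quat_eq_iff)

lemma Re_root_sextic:
  "16 * (of_real r)^6 + (- 8 * a^2 + 16 * of_real m) * (of_real r)^4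
     + (- (a^2) * (4 * of_real m - a^2) + 4 * a^2 * (of_real n)^2 + 4 * d^2) * (of_real r)^2
     - a^4 * (of_real n)^2 = (0 :: quat)"
proof -
  have "a^4 = (a^2)^2" by simp
  then have "a^4 = of_real ((qnorm2 a)^2)" unfolding a_square by simp
  then show ?thesis
    using Re_root_sextic_real unfolding a_square d_square
    by (simp add: quat_eq_iff) algebra
qed

lemma Imq_root_formula:
  assumes "n \<noteq> 0"
  shows "Imq z = - inverse (2 * of_real r + a) *
    (of_real (1 / (2 * r)) * a * (of_real r + of_real n) * (2 * of_real r + a) + d)"
proof (rule eq_neg_inverse_mult_if)
  show "2 * of_real r + a \<noteq> 0"
    using real_plus_a_nz[of "2 * r"] by simp
  have "qnorm2 a > 0"
    using a_nz by (rule quat_sq_pos)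
  then have "r \<noteq> 0"
    using root_dot_relation assms by auto
  define q where "q = 1 / (2 * r)"
  have q: "q * (2 * r) = 1"
    using \<open>r \<noteq> 0\<close> by (simp add: q_def)
  show "(2 * of_real r + a) * Imq z =
      - (of_real (1 / (2 * r)) * a * (of_real r + of_real n) * (2 * of_real r + a) + d)"
    unfolding q_def[symmetric] using root_components root_dot_relation q
    by (simp add: quat_eq_iff a_pure d_pure qdot_def qnorm2_def) algebra
qed

lemma Re_root_zero_case:
  assumes "n = 0" "r = 0"
  shows "(- ((Imq z)^2))^2 + (a^2 - 2 * of_real m) * (- ((Imq z)^2)) + (of_real m)^2 - d^2 = 0"
    and "Imq z = - inverse a * (of_real m + d - (- ((Imq z)^2)))"
proof -
  have dot_d: "qdot (a * z) d + qnorm2 d = 0"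
    using root_components a_perp_d assms unfolding qdot_def qnorm2_def by (simp add: a_pure d_pure) algebra
  have dot_axv: "qnorm2 a * qnorm2 (Imq z) - (qdot a z)^2 + qdot (a * z) d = 0"
    using root_components a_perp_d unfolding qdot_def qnorm2_def by (simp add: a_pure) algebra
  have "qnorm2 (Imq z) = m - qdot a z"
    using root_components(1) assms by simp
  with dot_d dot_axv have "(qnorm2 (Imq z))^2 - (2 * m + qnorm2 a) * qnorm2 (Imq z) + m^2 + qnorm2 d = 0"
    by algebra
  then show "(- ((Imq z)^2))^2 + (a^2 - 2 * of_real m) * (- ((Imq z)^2)) + (of_real m)^2 - d^2 = 0"
    unfolding Imq_square a_square d_square
    by (simp add: quat_eq_iff power2_eq_square) algebra
  show "Imq z = - inverse a * (of_real m + d - (- ((Imq z)^2)))"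
  proof (rule eq_neg_inverse_mult_if[OF a_nz])
    show "a * Imq z = - (of_real m + d - (- ((Imq z)^2)))"
      unfolding Imq_square using root_components assms
      by (simp add: quat_eq_iff a_pure d_pure qdot_def qnorm2_def)
  qed
qed

lemma Re_root_nonzero_case:
  assumes "n = 0" "r \<noteq> 0"
  shows "16 * (of_real r)^4 + (- 8 * a^2 + 16 * of_real m) * (of_real r)^2
      - a^2 * (4 * of_real m - a^2) + 4 * d^2 = (0 :: quat)"
    and "Imq z = - inverse (2 * of_real r + a) * ((1/2) * a * (2 * of_real r + a) + d)"
proof -
  have "r^2 * (16 * r^4 + (8 * qnorm2 a + 16 * m) * r^2
      + (4 * m * qnorm2 a + (qnorm2 a)^2 - 4 * qnorm2 d)) = 0"
    using Re_root_sextic_real assms(1) by algebra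
  then have "16 * r^4 + (8 * qnorm2 a + 16 * m) * r^2
      + (4 * m * qnorm2 a + (qnorm2 a)^2 - 4 * qnorm2 d) = 0"
    using assms(2) by simp
  then show "16 * (of_real r)^4 + (- 8 * a^2 + 16 * of_real m) * (of_real r)^2
      - a^2 * (4 * of_real m - a^2) + 4 * d^2 = (0 :: quat)"
    unfolding a_square d_square
    by (simp add: quat_eq_iff) algebra
  have "r * (2 * qdot a z + qnorm2 a) = 0"
    using root_dot_relation assms(1) by algebra
  then have P: "2 * qdot a z + qnorm2 a = 0"
    using assms(2) by simp
  show "Imq z = - inverse (2 * of_real r + a) * ((1/2) * a * (2 * of_real r + a) + d)"
  proof (rule eq_neg_inverse_mult_if)
    show "2 * of_real r + a \<noteq> 0"
      using real_plus_a_nz[of "2 * r"] by simp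
    show "(2 * of_real r + a) * Imq z = - ((1/2) * a * (2 * of_real r + a) + d)"
      using root_components assms(1) P
      by (simp add: quat_eq_iff a_pure d_pure qdot_def qnorm2_def) algebra
  qed
qed

end

theorem mainTheorem18:
  fixes a d z0 :: quat and m n :: real
  assumes a_nz: "a \<noteq> 0" and d_nz: "d \<noteq> 0"
    and a_pure: "Re a = 0"
    and anti: "a * d = - (d * a)"
    and root: "z0^2 + a * z0 + of_real m + of_real n * a + d = 0"
  shows "(n \<noteq> 0 \<longrightarrow>
       (16 * (of_real (Re z0))^6 + (- 8 * a^2 + 16 * of_real m) * (of_real (Re z0))^4
        + (- (a^2) * (4 * of_real m - a^2) + 4 * a^2 * (of_real n)^2 + 4 * d^2) * (of_real (Re z0))^2
        - a^4 * (of_real n)^2 = 0)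
     \<and> Imq z0 = - inverse (2 * of_real (Re z0) + a) *
          (of_real (1 / (2 * Re z0)) * a * (of_real (Re z0) + of_real n) * (2 * of_real (Re z0) + a) + d))
  \<and> (n = 0 \<longrightarrow>
       (Re z0 = 0
        \<and> (- ((Imq z0)^2))^2 + (a^2 - 2 * of_real m) * (- ((Imq z0)^2)) + (of_real m)^2 - d^2 = 0
        \<and> Imq z0 = - inverse a * (of_real m + d - (- ((Imq z0)^2))))
     \<or> (16 * (of_real (Re z0))^4 + (- 8 * a^2 + 16 * of_real m) * (of_real (Re z0))^2
          - a^2 * (4 * of_real m - a^2) + 4 * d^2 = 0
        \<and> Imq z0 = - inverse (2 * of_real (Re z0) + a) * ((1/2) * a * (2 * of_real (Re z0) + a) + d)))"
proof -
  interpret quat_quadratic_root a d z0 m n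
    using a_nz a_pure anti root by unfold_locales
  show ?thesis
    using Re_root_sextic Imq_root_formula Re_root_zero_case Re_root_nonzero_case by blast
qed

end
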